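(* Let $A=(a_{i,j})_{i,j\in\mathbf N}\in\mathcal A$. Suppose there exist positive constants $C$ and $c$ such that (i) $a_{i,j}=0$ whenever $i>Cj^c$, and (ii) $|a_{i,j}|\le Cj^c$ for all $i,j$. Then $A\in\mathcal{DR}$. Furthermore, the set of all elements of $\mathcal A$ satisfying these conditions (with constants depending on the matrix) is a subring of $\mathcal{DR}$.
   Context: $\mathbf N=\{1,2,\dots\}$. $\mathcal A$ is the ring of matrices $(a_{i,j})_{i,j\in\mathbf N}$ with complex entries and finitely many nonzero entries in each column. $\mathcal A$ acts on the right on the space $\mathbf C^{\mathbf N}$ of complex sequences by $(fA)(n)=\sum_m a_{m,n}f(m)$. $\mathcal{DS}\subseteq\mathbf C^{\mathbf N}$ is the subspace of sequences $f$ for which there exist positive constants $C,c$ with $|f(n)|\le Cn^c$ for all $n$. $\mathcal{DR}$ is the subalgebra of $\mathcal A$ consisting of all $A$ with $\mathcal{DS}\,A\subseteq\mathcal{DS}$. *)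

theory Defs
  imports "HOL-Analysis.Analysis"
begin

text \<open>Indices range over N = {1,2,...}; we model matrices as functions
  nat => nat => complex and sequences as nat => complex, and only entries
  with indices >= 1 are meaningful (index 0 is ignored everywhere).\<close>

type_synonym cmat = "nat \<Rightarrow> nat \<Rightarrow> complex"
type_synonym cseq = "nat \<Rightarrow> complex"

definition in_A :: "cmat \<Rightarrow> bool" where
  "in_A A \<longleftrightarrow> (\<forall>j\<ge>1. finite {i. i \<ge> 1 \<and> A i j \<noteq> 0})"

definition act :: "cseq \<Rightarrow> cmat \<Rightarrow> cseq" where
  "act f A = (\<lambda>n. \<Sum>m\<in>{m. m \<ge> 1 \<and> A m n \<noteq> 0}. A m n * f m)"

definition mat_add :: "cmat \<Rightarrow> cmat \<Rightarrow> cmat" where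
  "mat_add A B = (\<lambda>i j. A i j + B i j)"

definition mat_neg :: "cmat \<Rightarrow> cmat" where
  "mat_neg A = (\<lambda>i j. - A i j)"

definition mat_zero :: cmat where
  "mat_zero = (\<lambda>i j. 0)"

definition mat_one :: cmat where
  "mat_one = (\<lambda>i j. if i = j then 1 else 0)"

definition mat_mult :: "cmat \<Rightarrow> cmat \<Rightarrow> cmat" where
  "mat_mult A B = (\<lambda>i k. \<Sum>j\<in>{j. j \<ge> 1 \<and> B j k \<noteq> 0}. A i j * B j k)"

definition DS :: "cseq set" where
  "DS = {f. \<exists>C c. C > 0 \<and> c > 0 \<and>
           (\<forall>n\<ge>1. norm (f n) \<le> C * real n powr c)}"

definition DR :: "cmat set" where
  "DR = {A. in_A A \<and> (\<forall>f\<in>DS. act f A \<in> DS)}"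

definition poly_conds :: "real \<Rightarrow> real \<Rightarrow> cmat \<Rightarrow> bool" where
  "poly_conds C c A \<longleftrightarrow>
     (\<forall>i\<ge>1. \<forall>j\<ge>1. real i > C * real j powr c \<longrightarrow> A i j = 0) \<and>
     (\<forall>i\<ge>1. \<forall>j\<ge>1. norm (A i j) \<le> C * real j powr c)"

definition PB :: "cmat set" where
  "PB = {A. in_A A \<and> (\<exists>C c. C > 0 \<and> c > 0 \<and> poly_conds C c A)}"

end

theory Submission
  imports Defs
begin

text \<open>Condition (i) confines column n of A to the rows m \<le> C n^c, so (fA)(n) is a sum of at
  most C n^c terms, each of size at most C n^c \<cdot> D (C n^c)^d when |f(m)| \<le> D m^d: a polynomial
  in n. For a product AB the same estimate applies to (AB)_{ik} = \<Sum>_j a_{ij} b_{jk}, where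
  j \<le> K k^e forces a_{ij} to vanish for i beyond K j^e \<le> K^{1+e} k^{e^2} and to be
  bounded by that quantity otherwise.\<close>

lemma poly_conds_support_le:
  assumes "poly_conds C c A" "m \<ge> 1" "n \<ge> 1" "A m n \<noteq> 0"
  shows "real m \<le> C * real n powr c"
  using assms unfolding poly_conds_def by (meson not_less)

lemma column_support_subset:
  assumes "poly_conds C c A" "n \<ge> 1"
  shows "{m. m \<ge> 1 \<and> A m n \<noteq> 0} \<subseteq> {1..nat \<lfloor>C * real n powr c\<rfloor>}"
  using poly_conds_support_le[OF assms(1) _ assms(2)] by (auto simp: le_nat_floor)

lemma finite_column_support:
  assumes "poly_conds C c A" "n \<ge> 1"
  shows "finite {m. m \<ge> 1 \<and> A m n \<noteq> 0}"
  using column_support_subset[OF assms] finite_subset by blast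

lemma card_column_support_le:
  assumes "poly_conds C c A" "n \<ge> 1" "C > 0"
  shows "real (card {m. m \<ge> 1 \<and> A m n \<noteq> 0}) \<le> C * real n powr c"
proof -
  have "card {m. m \<ge> 1 \<and> A m n \<noteq> 0} \<le> nat \<lfloor>C * real n powr c\<rfloor>"
    using card_mono[OF _ column_support_subset[OF assms(1,2)]] by simp
  hence "real (card {m. m \<ge> 1 \<and> A m n \<noteq> 0}) \<le> real (nat \<lfloor>C * real n powr c\<rfloor>)"
    by linarith
  also have "\<dots> \<le> C * real n powr c"
    using assms(3) by (intro of_nat_floor) simp
  finally show ?thesis .
qed

lemma poly_conds_imp_in_A: "poly_conds C c A \<Longrightarrow> in_A A"
  unfolding in_A_def using finite_column_support by blast

lemma norm_sum_le_card_mult: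
  fixes g :: "'a \<Rightarrow> 'b::real_normed_vector"
  assumes "real (card S) \<le> X" "\<And>m. m \<in> S \<Longrightarrow> norm (g m) \<le> Y" "Y \<ge> 0"
  shows "norm (sum g S) \<le> X * Y"
proof -
  have "norm (sum g S) \<le> (\<Sum>m\<in>S. norm (g m))" by (rule norm_sum)
  also have "\<dots> \<le> real (card S) * Y" using assms(2) by (rule sum_bounded_above)
  also have "\<dots> \<le> X * Y" using assms(1,3) by (rule mult_right_mono)
  finally show ?thesis .
qed

lemma powr_le_powr_of_poly_bound:
  fixes x y K e d :: real
  assumes "0 \<le> x" "x \<le> K * y powr e" "K > 0" "y > 0" "d \<ge> 0"
  shows "x powr d \<le> K powr d * y powr (e * d)"
proof -
  have "x powr d \<le> (K * y powr e) powr d" using assms by (intro powr_mono2) auto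
  also have "\<dots> = K powr d * y powr (e * d)" using assms by (simp add: powr_mult powr_powr)
  finally show ?thesis .
qed

lemma poly_conds_mono:
  assumes "poly_conds C c A" "C \<le> C'" "c \<le> c'" "C > 0"
  shows "poly_conds C' c' A"
proof -
  have le: "C * real j powr c \<le> C' * real j powr c'" if "j \<ge> 1" for j :: nat
    using that assms(2-4) by (intro mult_mono powr_mono) auto
  show ?thesis unfolding poly_conds_def
  proof (intro conjI allI impI)
    fix i j :: nat assume ij: "i \<ge> 1" "j \<ge> 1" "real i > C' * real j powr c'"
    hence "\<not> real i \<le> C * real j powr c" using le[OF ij(2)] by linarith
    thus "A i j = 0" using poly_conds_support_le[OF assms(1) ij(1,2)] by blast
  next
    fix i j :: nat assume ij: "i \<ge> 1" "j \<ge> 1"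
    hence "norm (A i j) \<le> C * real j powr c" using assms(1) unfolding poly_conds_def by blast
    thus "norm (A i j) \<le> C' * real j powr c'" using le[OF ij(2)] by linarith
  qed
qed

lemma act_in_DS:
  assumes "poly_conds C c A" "C > 0" "c > 0" "f \<in> DS"
  shows "act f A \<in> DS"
proof -
  obtain D d where D: "D > 0" "d > 0" "\<forall>m\<ge>1. norm (f m) \<le> D * real m powr d"
    using assms(4) unfolding DS_def by auto
  have "norm (act f A n) \<le> (C * C * D * C powr d) * real n powr (2 * c + c * d)"
    if n: "n \<ge> 1" for n
  proof -
    let ?N = "C * real n powr c"
    have "norm (act f A n) \<le> ?N * (?N * (D * (C powr d * real n powr (c * d))))"
      unfolding act_def
    proof (rule norm_sum_le_card_mult[OF card_column_support_le[OF assms(1) n assms(2)]])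
      fix m assume m: "m \<in> {m. m \<ge> 1 \<and> A m n \<noteq> 0}"
      have "real m powr d \<le> C powr d * real n powr (c * d)"
        using poly_conds_support_le[OF assms(1) _ n] m n assms(2) D(2)
        by (intro powr_le_powr_of_poly_bound) auto
      moreover have "norm (f m) \<le> D * real m powr d" using D(3) m by simp
      ultimately have "norm (f m) \<le> D * (C powr d * real n powr (c * d))"
        using D(1) by (meson mult_left_mono order_trans less_imp_le)
      moreover have "norm (A m n) \<le> ?N" using assms(1) m n unfolding poly_conds_def by auto
      ultimately show "norm (A m n * f m) \<le> ?N * (D * (C powr d * real n powr (c * d)))"
        unfolding norm_mult using assms(2) by (intro mult_mono) auto
    qed (use assms(2) D in auto)
    also have "\<dots> = (C * C * D * C powr d) * (real n powr c * real n powr c * real n powr (c * d))"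
      by (simp add: mult_ac)
    also have "\<dots> = (C * C * D * C powr d) * real n powr (c + c + c * d)"
      by (simp only: powr_add)
    also have "\<dots> = (C * C * D * C powr d) * real n powr (2 * c + c * d)"
      by (simp add: algebra_simps)
    finally show ?thesis .
  qed
  moreover have "C * C * D * C powr d > 0" "2 * c + c * d > 0"
    using assms(2,3) D(1,2) by (auto intro: add_pos_pos)
  ultimately show ?thesis unfolding DS_def by blast
qed

lemma poly_conds_in_DR:
  assumes "poly_conds C c A" "C > 0" "c > 0"
  shows "A \<in> DR"
  using act_in_DS[OF assms] poly_conds_imp_in_A[OF assms(1)] unfolding DR_def by blast

lemma PB_intro: "C > 0 \<Longrightarrow> c > 0 \<Longrightarrow> poly_conds C c A \<Longrightarrow> A \<in> PB"
  unfolding PB_def using poly_conds_imp_in_A by blast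

lemma PB_subset_DR: "PB \<subseteq> DR"
  unfolding PB_def using poly_conds_in_DR by blast

lemma PB_common_constants:
  assumes "A \<in> PB" "B \<in> PB"
  obtains K e where "K \<ge> 1" "e \<ge> 1" "poly_conds K e A" "poly_conds K e B"
proof -
  obtain C c where C: "C > 0" "c > 0" "poly_conds C c A" using assms(1) unfolding PB_def by blast
  obtain C' c' where C': "C' > 0" "c' > 0" "poly_conds C' c' B" using assms(2) unfolding PB_def by blast
  let ?K = "max 1 (max C C')" and ?e = "max 1 (max c c')"
  have "poly_conds ?K ?e A" "poly_conds ?K ?e B"
    using poly_conds_mono[OF C(3) _ _ C(1)] poly_conds_mono[OF C'(3) _ _ C'(1)] by auto
  thus ?thesis by (intro that) auto
qed

lemma poly_conds_add:
  assumes "poly_conds K e A" "poly_conds K e B" "K \<ge> 1"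
  shows "poly_conds (2 * K) e (mat_add A B)"
  unfolding poly_conds_def
proof (intro conjI allI impI)
  fix i j :: nat assume ij: "i \<ge> 1" "j \<ge> 1" "real i > 2 * K * real j powr e"
  moreover have "K * real j powr e \<le> 2 * K * real j powr e" using assms(3) by simp
  ultimately have "real i > K * real j powr e" by linarith
  hence "A i j = 0" "B i j = 0" using assms(1,2) ij(1,2) unfolding poly_conds_def by blast+
  thus "mat_add A B i j = 0" unfolding mat_add_def by simp
next
  fix i j :: nat assume "i \<ge> 1" "j \<ge> 1"
  hence "norm (A i j) \<le> K * real j powr e" "norm (B i j) \<le> K * real j powr e"
    using assms(1,2) unfolding poly_conds_def by blast+
  thus "norm (mat_add A B i j) \<le> 2 * K * real j powr e"
    unfolding mat_add_def using norm_triangle_ineq[of "A i j" "B i j"] by linarith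
qed

lemma poly_conds_neg: "poly_conds K e A \<Longrightarrow> poly_conds K e (mat_neg A)"
  unfolding poly_conds_def mat_neg_def by auto

lemma poly_conds_mult:
  assumes A: "poly_conds K e A" and B: "poly_conds K e B" and K: "K \<ge> 1" and e: "e \<ge> 1"
  shows "poly_conds (K powr (3 + e)) (2 * e + e * e) (mat_mult A B)"
proof -
  have row_weight: "K * real j powr e \<le> K powr (1 + e) * real k powr (e * e)"
    if "k \<ge> 1" "j \<ge> 1" "B j k \<noteq> 0" for j k
  proof -
    have "real j powr e \<le> K powr e * real k powr (e * e)"
      using poly_conds_support_le[OF B that(2,1,3)] that K e
      by (intro powr_le_powr_of_poly_bound) auto
    hence "K * real j powr e \<le> K * (K powr e * real k powr (e * e))" using K by simp
    thus ?thesis using K by (simp add: powr_add)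
  qed
  have weight_le: "K powr (1 + e) * real k powr (e * e) \<le> K powr (3 + e) * real k powr (2 * e + e * e)"
    if "k \<ge> 1" for k :: nat
    using that K e by (intro mult_mono powr_mono) auto
  show ?thesis unfolding poly_conds_def
  proof (intro conjI allI impI)
    fix i k :: nat assume ik: "i \<ge> 1" "k \<ge> 1" "real i > K powr (3 + e) * real k powr (2 * e + e * e)"
    have "A i j = 0" if "j \<ge> 1" "B j k \<noteq> 0" for j
    proof -
      have "real i > K * real j powr e"
        using row_weight[OF ik(2) that] weight_le[OF ik(2)] ik(3) by linarith
      thus ?thesis using A ik(1) that(1) unfolding poly_conds_def by blast
    qed
    thus "mat_mult A B i k = 0" unfolding mat_mult_def by (intro sum.neutral) auto
  next
    fix i k :: nat assume ik: "i \<ge> 1" "k \<ge> 1"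
    let ?T = "K powr (1 + e) * real k powr (e * e)" and ?N = "K * real k powr e"
    have "norm (mat_mult A B i k) \<le> ?N * (?T * ?N)"
      unfolding mat_mult_def
    proof (rule norm_sum_le_card_mult[OF card_column_support_le[OF B ik(2)]])
      fix j assume j: "j \<in> {j. j \<ge> 1 \<and> B j k \<noteq> 0}"
      have "norm (A i j) \<le> K * real j powr e" using A ik j unfolding poly_conds_def by auto
      also have "\<dots> \<le> ?T" using row_weight[OF ik(2)] j by auto
      finally have "norm (A i j) \<le> ?T" .
      moreover have "norm (B j k) \<le> ?N" using B ik j unfolding poly_conds_def by auto
      ultimately show "norm (A i j * B j k) \<le> ?T * ?N"
        unfolding norm_mult by (intro mult_mono) auto
    qed (use K in auto)
    also have "\<dots> = (K powr 1 * K powr (1 + e) * K powr 1) * (real k powr e * real k powr (e * e) * real k powr e)"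
      using K by (simp add: mult_ac)
    also have "\<dots> = K powr (1 + (1 + e) + 1) * real k powr (e + e * e + e)"
      by (simp only: powr_add)
    also have "\<dots> = K powr (3 + e) * real k powr (2 * e + e * e)"
      by (simp add: algebra_simps)
    finally show "norm (mat_mult A B i k) \<le> K powr (3 + e) * real k powr (2 * e + e * e)" .
  qed
qed

lemma PB_add:
  assumes "A \<in> PB" "B \<in> PB"
  shows "mat_add A B \<in> PB"
proof -
  obtain K e where K: "K \<ge> 1" and e: "e \<ge> 1" and AB: "poly_conds K e A" "poly_conds K e B"
    using PB_common_constants[OF assms] .
  have "poly_conds (2 * K) e (mat_add A B)" using poly_conds_add[OF AB K] .
  moreover have "2 * K > 0" using K by simp
  ultimately show ?thesis using e by (intro PB_intro[of "2 * K" e]) auto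
qed

lemma PB_neg: "A \<in> PB \<Longrightarrow> mat_neg A \<in> PB"
  unfolding PB_def using poly_conds_neg poly_conds_imp_in_A by blast

lemma PB_mult:
  assumes "A \<in> PB" "B \<in> PB"
  shows "mat_mult A B \<in> PB"
proof -
  obtain K e where K: "K \<ge> 1" and e: "e \<ge> 1" and "poly_conds K e A" "poly_conds K e B"
    using PB_common_constants[OF assms] .
  hence "poly_conds (K powr (3 + e)) (2 * e + e * e) (mat_mult A B)"
    using K e by (intro poly_conds_mult)
  moreover have "K powr (3 + e) > 0" using K by simp
  moreover have "2 * e + e * e > 0" using e by (simp add: add_pos_nonneg)
  ultimately show ?thesis by (rule PB_intro[rotated 2])
qed

theorem lemma2p1:
  shows "(\<forall>A C c. in_A A \<and> C > 0 \<and> c > 0 \<and> poly_conds C c A \<longrightarrow> A \<in> DR)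
    \<and> PB \<subseteq> DR
    \<and> mat_zero \<in> PB \<and> mat_one \<in> PB
    \<and> (\<forall>A\<in>PB. \<forall>B\<in>PB. mat_add A B \<in> PB)
    \<and> (\<forall>A\<in>PB. mat_neg A \<in> PB)
    \<and> (\<forall>A\<in>PB. \<forall>B\<in>PB. mat_mult A B \<in> PB)"
proof -
  have "mat_zero \<in> PB" "mat_one \<in> PB"
    by (auto intro!: PB_intro[of 1 1] simp: poly_conds_def mat_zero_def mat_one_def)
  moreover have "\<forall>A C c. in_A A \<and> C > 0 \<and> c > 0 \<and> poly_conds C c A \<longrightarrow> A \<in> DR"
    using poly_conds_in_DR by blast
  ultimately show ?thesis using PB_subset_DR by (simp add: PB_add PB_neg PB_mult)
qed

end
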